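(* Every hypergraph in $\mathcal L$ is an atomic Maker-Breaker critical hypergraph.
   Context: A hypergraph $\mathcal H=(V,E)$ has finite vertex set $V$ and $E\subseteq 2^V\setminus\{\emptyset\}$. In the Maker-Breaker game on $\mathcal H$, Maker and Breaker alternately claim unclaimed vertices, Maker first, until all are claimed; Maker wins if he claims all vertices of some edge, Breaker otherwise. $\mathcal H$ is Maker-Breaker critical if Maker wins on $\mathcal H$ but Breaker wins on $(V,E\setminus\{e\})$ for every $e\in E$; it is atomic Maker-Breaker critical if moreover it has no isolated vertices. $\mathcal H^1$ is the hypergraph with one vertex $v$ and the single edge $\{v\}$. For vertex-disjoint hypergraphs $\mathcal H_1,\mathcal H_2$ with edges $e_1\in E(\mathcal H_1)$, $e_2\in E(\mathcal H_2)$, the hypergraph $(\mathcal H_1,e_1)+(\mathcal H_2,e_2)$ has vertex set $V(\mathcal H_1)\cup V(\mathcal H_2)\cup\{z\}$ with $z$ a new vertex, and edge set $\big(E(\mathcal H_1)\cup E(\mathcal H_2)\cup\{e_1\cup\{z\},e_2\cup\{z\}\}\big)\setminus\{e_1,e_2\}$. $\mathcal L$ is the smallest family with $\mathcal H^1\in\mathcal L$ and closed under this operation: if $\mathcal H_1,\mathcal H_2\in\mathcal L$ (vertex-disjoint copies) and $e_i\in E(\mathcal H_i)$ are arbitrary, then $(\mathcal H_1,e_1)+(\mathcal H_2,e_2)\in\mathcal L$. *)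

theory Defs
  imports Main
begin

type_synonym 'a hypergraph = "'a set \<times> 'a set set"

definition is_hypergraph :: "'a hypergraph \<Rightarrow> bool" where
  "is_hypergraph H \<longleftrightarrow> finite (fst H) \<and> snd H \<subseteq> Pow (fst H) - {{}}"

text \<open>Maker-Breaker game positions: M = Maker's claimed vertices, B = Breaker's,
  the boolean says whether it is Maker's turn. mb_win V E t M B means Maker has a
  winning strategy from that position.\<close>

inductive mb_win :: "'a set \<Rightarrow> 'a set set \<Rightarrow> bool \<Rightarrow> 'a set \<Rightarrow> 'a set \<Rightarrow> bool"
  for V :: "'a set" and E :: "'a set set" where
  final: "V \<subseteq> M \<union> B \<Longrightarrow> \<exists>e\<in>E. e \<subseteq> M \<Longrightarrow> mb_win V E t M B"
| maker_move: "v \<in> V - (M \<union> B) \<Longrightarrow> mb_win V E False (insert v M) B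
      \<Longrightarrow> mb_win V E True M B"
| breaker_move: "\<not> V \<subseteq> M \<union> B \<Longrightarrow> \<forall>v\<in>V - (M \<union> B). mb_win V E True M (insert v B)
      \<Longrightarrow> mb_win V E False M B"

definition maker_wins :: "'a hypergraph \<Rightarrow> bool" where
  "maker_wins H \<longleftrightarrow> mb_win (fst H) (snd H) True {} {}"

definition breaker_wins :: "'a hypergraph \<Rightarrow> bool" where
  "breaker_wins H \<longleftrightarrow> \<not> maker_wins H"

definition mb_critical :: "'a hypergraph \<Rightarrow> bool" where
  "mb_critical H \<longleftrightarrow> maker_wins H \<and> (\<forall>e\<in>snd H. breaker_wins (fst H, snd H - {e}))"

definition atomic_mb_critical :: "'a hypergraph \<Rightarrow> bool" where
  "atomic_mb_critical H \<longleftrightarrow> mb_critical H \<and> (\<forall>v\<in>fst H. \<exists>e\<in>snd H. v \<in> e)"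

definition hsum :: "'a hypergraph \<Rightarrow> 'a set \<Rightarrow> 'a hypergraph \<Rightarrow> 'a set \<Rightarrow> 'a \<Rightarrow> 'a hypergraph" where
  "hsum H1 e1 H2 e2 z =
     (fst H1 \<union> fst H2 \<union> {z},
      (snd H1 \<union> snd H2 \<union> {insert z e1, insert z e2}) - {e1, e2})"

inductive in_L :: "'a hypergraph \<Rightarrow> bool" where
  base: "in_L ({v}, {{v}})"
| sum: "in_L H1 \<Longrightarrow> in_L H2 \<Longrightarrow> fst H1 \<inter> fst H2 = {} \<Longrightarrow>
        e1 \<in> snd H1 \<Longrightarrow> e2 \<in> snd H2 \<Longrightarrow> z \<notin> fst H1 \<union> fst H2 \<Longrightarrow>
        in_L (hsum H1 e1 H2 e2 z)"

end

theory Submission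
  imports Defs
begin

text \<open>Maker wins on every member of \<open>\<L>\<close> by claiming the gluing vertex \<open>z\<close> first: both
  halves \<open>H\<^sub>1, H\<^sub>2\<close> then become winning threats (each edge of \<open>H\<^sub>i\<close> is, possibly after adding \<open>z\<close>, an
  edge of the sum), and Breaker's next move can enter only one of the disjoint halves. Conversely, for
  every edge \<open>e\<close> there is a pairing of vertices such that every other edge contains a pair and
  some vertex of \<open>e\<close> stays unpaired; the latter lets \<open>z\<close> be paired with an unpaired vertex
  of \<open>e\<^sub>2\<close> when two such pairings are glued. Breaker answers each move in a pair with the
  other vertex of the pair, so after deleting \<open>e\<close> Maker never completes an edge.\<close>

lemma hsum_commute: "hsum H1 e1 H2 e2 z = hsum H2 e2 H1 e1 z"
  unfolding hsum_def by auto

lemma in_L_is_hypergraph: "in_L H \<Longrightarrow> is_hypergraph H"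
  by (induction rule: in_L.induct) (auto simp: is_hypergraph_def hsum_def)

lemma in_L_vertices_nonempty: "in_L H \<Longrightarrow> fst H \<noteq> {}"
  by (induction rule: in_L.induct) (auto simp: hsum_def)

locale L_sum =
  fixes H1 :: "'a hypergraph" and e1 :: "'a set" and H2 :: "'a hypergraph" and e2 :: "'a set"
    and z :: 'a
  assumes in_L1: "in_L H1" and in_L2: "in_L H2" and disjoint: "fst H1 \<inter> fst H2 = {}"
    and edge1: "e1 \<in> snd H1" and edge2: "e2 \<in> snd H2" and fresh: "z \<notin> fst H1 \<union> fst H2"
begin

lemma swap: "L_sum H2 e2 H1 e1 z"
  using in_L1 in_L2 disjoint edge1 edge2 fresh by unfold_locales auto

lemma edges_nonempty_subset: "f \<in> snd H1 \<Longrightarrow> f \<noteq> {} \<and> f \<subseteq> fst H1" "f \<in> snd H2 \<Longrightarrow> f \<noteq> {} \<and> f \<subseteq> fst H2"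
  using in_L_is_hypergraph[OF in_L1] in_L_is_hypergraph[OF in_L2] by (auto simp: is_hypergraph_def)

lemma fst_hsum: "fst (hsum H1 e1 H2 e2 z) = insert z (fst H1 \<union> fst H2)"
  by (auto simp: hsum_def)

lemma snd_hsum:
  "snd (hsum H1 e1 H2 e2 z) = insert (insert z e1) (insert (insert z e2) (snd H1 - {e1} \<union> (snd H2 - {e2})))"
proof -
  have "e1 \<notin> snd H2" "e2 \<notin> snd H1" "z \<notin> e1" "z \<notin> e2"
    using edges_nonempty_subset edge1 edge2 disjoint fresh by blast+
  then show ?thesis unfolding hsum_def by (simp add: insert_Diff_if) blast
qed

end

lemma in_L_atomic: "in_L H \<Longrightarrow> v \<in> fst H \<Longrightarrow> \<exists>e\<in>snd H. v \<in> e"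
proof (induction arbitrary: v rule: in_L.induct)
  case (sum H1 H2 e1 e2 z)
  interpret L_sum H1 e1 H2 e2 z using sum.hyps by unfold_locales
  from sum.prems consider "v = z" | "v \<in> fst H1" | "v \<in> fst H2" unfolding fst_hsum by blast
  then show ?case
  proof cases
    case 1 then show ?thesis unfolding snd_hsum by simp
  next
    case 2
    then obtain f where "f \<in> snd H1" "v \<in> f" using sum.IH(1) by blast
    then show ?thesis unfolding snd_hsum by auto
  next
    case 3
    then obtain f where "f \<in> snd H2" "v \<in> f" using sum.IH(2) by blast
    then show ?thesis unfolding snd_hsum by auto
  qed
qed simp

lemma card_unclaimed_less:
  assumes "finite V" "v \<in> V - (M \<union> B)"
  shows "card (V - (insert v M \<union> B)) < card (V - (M \<union> B))"
    and "card (V - (M \<union> insert v B)) < card (V - (M \<union> B))"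
proof -
  have "card (V - (M \<union> B) - {v}) < card (V - (M \<union> B))"
    using assms by (intro card_Diff1_less) auto
  moreover have "V - (insert v M \<union> B) = V - (M \<union> B) - {v}" "V - (M \<union> insert v B) = V - (M \<union> B) - {v}"
    by blast+
  ultimately show "card (V - (insert v M \<union> B)) < card (V - (M \<union> B))"
    and "card (V - (M \<union> insert v B)) < card (V - (M \<union> B))" by simp_all
qed

lemma mb_win_if_owns_edge:
  assumes "finite V" "e \<in> E" "e \<subseteq> M"
  shows "mb_win V E t M B"
  using assms(3)
proof (induction "card (V - (M \<union> B))" arbitrary: t M B rule: less_induct)
  case less
  show ?case
  proof (cases "V \<subseteq> M \<union> B")
    case True
    show ?thesis by (rule mb_win.final[OF True]) (use assms(2) less.prems in blast)
  next
    case False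
    then obtain v where v: "v \<in> V - (M \<union> B)" by blast
    have win_M: "mb_win V E t' (insert v M) B" for t'
      using less.hyps[OF card_unclaimed_less(1)[OF assms(1) v]] less.prems by blast
    show ?thesis
    proof (cases t)
      case True
      then show ?thesis using mb_win.maker_move[OF v win_M] by simp
    next
      case False
      have "mb_win V E True M (insert w B)" if "w \<in> V - (M \<union> B)" for w
        using less.hyps[OF card_unclaimed_less(2)[OF assms(1) that]] less.prems by blast
      with \<open>\<not> V \<subseteq> M \<union> B\<close> False show ?thesis by (simp add: mb_win.breaker_move)
    qed
  qed
qed

definition maker_threat :: "'a set \<Rightarrow> 'a set set \<Rightarrow> 'a set \<Rightarrow> 'a set \<Rightarrow> 'a hypergraph \<Rightarrow> bool" where
  "maker_threat V E M B H \<longleftrightarrow> fst H \<subseteq> V - (M \<union> B) \<and> (\<forall>f\<in>snd H. \<exists>e\<in>E. e \<subseteq> f \<union> M)"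

lemma (in L_sum) maker_threat_hsum:
  assumes "maker_threat V E M B (hsum H1 e1 H2 e2 z)"
  shows "maker_threat V E (insert z M) B H1"
  unfolding maker_threat_def
proof (intro conjI ballI)
  show "fst H1 \<subseteq> V - (insert z M \<union> B)"
    using assms fresh unfolding maker_threat_def fst_hsum by blast
next
  fix f assume f: "f \<in> snd H1"
  have threat: "\<exists>e\<in>E. e \<subseteq> g \<union> M" if "g \<in> snd (hsum H1 e1 H2 e2 z)" for g
    using assms that unfolding maker_threat_def by blast
  show "\<exists>e\<in>E. e \<subseteq> f \<union> insert z M"
  proof (cases "f = e1")
    case True
    then have "insert z f \<in> snd (hsum H1 e1 H2 e2 z)" unfolding snd_hsum by simp
    then obtain e where "e \<in> E" "e \<subseteq> insert z f \<union> M" using threat by blast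
    then show ?thesis by auto
  next
    case False
    then have "f \<in> snd (hsum H1 e1 H2 e2 z)" using f unfolding snd_hsum by simp
    then obtain e where "e \<in> E" "e \<subseteq> f \<union> M" using threat by blast
    then show ?thesis by auto
  qed
qed

theorem maker_threat_wins:
  assumes "finite V" "in_L H" "maker_threat V E M B H"
  shows "mb_win V E True M B"
  using assms(2,3)
proof (induction arbitrary: M B rule: in_L.induct)
  case (base v)
  then have v: "v \<in> V - (M \<union> B)" and "\<exists>e\<in>E. e \<subseteq> insert v M"
    unfolding maker_threat_def by auto
  then obtain e where "e \<in> E" "e \<subseteq> insert v M" by blast
  then show ?case using mb_win.maker_move[OF v mb_win_if_owns_edge[OF assms(1)]] by blast
next
  case (sum H1 H2 e1 e2 z)
  interpret L_sum H1 e1 H2 e2 z using sum.hyps by unfold_locales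
  interpret swapped: L_sum H2 e2 H1 e1 z by (rule swap)
  have z: "z \<in> V - (M \<union> B)" using sum.prems unfolding maker_threat_def fst_hsum by blast
  have threat1: "maker_threat V E (insert z M) B H1"
    using maker_threat_hsum[OF sum.prems] .
  have threat2: "maker_threat V E (insert z M) B H2"
    using swapped.maker_threat_hsum sum.prems hsum_commute by metis
  have "\<not> V \<subseteq> insert z M \<union> B"
    using threat1 in_L_vertices_nonempty[OF sum.hyps(1)] unfolding maker_threat_def by blast
  moreover have "mb_win V E True (insert z M) (insert w B)" if "w \<in> V - (insert z M \<union> B)" for w
  proof (cases "w \<in> fst H1")
    case True
    then have "w \<notin> fst H2" using disjoint by blast
    then have "maker_threat V E (insert z M) (insert w B) H2"
      using threat2 unfolding maker_threat_def by blast
    then show ?thesis using sum.IH(2) by blast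
  next
    case False
    then have "maker_threat V E (insert z M) (insert w B) H1"
      using threat1 unfolding maker_threat_def by blast
    then show ?thesis using sum.IH(1) by blast
  qed
  ultimately have "mb_win V E False (insert z M) B" by (simp add: mb_win.breaker_move)
  then show ?case by (rule mb_win.maker_move[OF z])
qed

definition pairing :: "'a set \<Rightarrow> 'a set set \<Rightarrow> bool" where
  "pairing V P \<longleftrightarrow> (\<forall>p\<in>P. card p = 2) \<and> pairwise disjnt P \<and> \<Union>P \<subseteq> V"

lemma pairing_mono: "pairing V P \<Longrightarrow> V \<subseteq> W \<Longrightarrow> pairing W P"
  by (auto simp: pairing_def)

lemma pairing_Un:
  assumes "pairing V1 P1" "pairing V2 P2" "V1 \<inter> V2 = {}"
  shows "pairing (V1 \<union> V2) (P1 \<union> P2)"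
proof -
  have "disjnt p q" if "p \<in> P1" "q \<in> P2" for p q
    using assms that unfolding pairing_def disjnt_def by blast
  then show ?thesis
    using assms by (auto simp: pairing_def pairwise_def disjnt_sym)
qed

lemma pairing_insert:
  assumes "pairing V P" "a \<in> V - \<Union>P" "b \<in> V - \<Union>P" "a \<noteq> b"
  shows "pairing V (insert {a, b} P)"
  using assms by (auto simp: pairing_def pairwise_insert disjnt_def)

definition pairs_answered :: "'a set set \<Rightarrow> 'a set \<Rightarrow> 'a set \<Rightarrow> bool" where
  "pairs_answered P M B \<longleftrightarrow> M \<inter> B = {} \<and> (\<forall>p\<in>P. p \<inter> M \<noteq> {} \<longrightarrow> p \<inter> B \<noteq> {})"

lemma pairs_answered_insert:
  assumes "pairs_answered P (M - {u}) B" "u \<notin> B" "w \<notin> M"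
    and "\<And>q. q \<in> P \<Longrightarrow> u \<in> q \<Longrightarrow> q \<inter> insert w B \<noteq> {}"
  shows "pairs_answered P M (insert w B)"
  unfolding pairs_answered_def
proof (intro conjI ballI impI)
  show "M \<inter> insert w B = {}" using assms(1-3) unfolding pairs_answered_def by blast
next
  fix q assume q: "q \<in> P" "q \<inter> M \<noteq> {}"
  show "q \<inter> insert w B \<noteq> {}"
  proof (cases "u \<in> q")
    case False
    then have "q \<inter> (M - {u}) \<noteq> {}" using q(2) by blast
    then show ?thesis using assms(1) q(1) unfolding pairs_answered_def by blast
  qed (use assms(4) q(1) in blast)
qed

lemma pairing_response:
  assumes P: "pairing V P" and answered: "pairs_answered P (M - {u}) B"
    and u: "u \<in> M" "u \<notin> B" and free: "\<not> V \<subseteq> M \<union> B"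
  shows "\<exists>w\<in>V - (M \<union> B). pairs_answered P M (insert w B)"
proof (cases "\<exists>p\<in>P. u \<in> p \<and> p \<inter> B = {}")
  case True
  then obtain p where p: "p \<in> P" "u \<in> p" "p \<inter> B = {}" by blast
  moreover have "card p = 2" using P p by (simp add: pairing_def)
  ultimately obtain w where pw: "p = {u, w}" "u \<noteq> w"
    by (metis card_2_iff insert_commute insertE singletonD)
  have "w \<in> V" using P p pw by (auto simp: pairing_def)
  moreover have "w \<notin> B" using p pw by blast
  moreover have "w \<notin> M"
  proof
    assume "w \<in> M"
    then have "p \<inter> (M - {u}) \<noteq> {}" using pw by blast
    then show False using answered p unfolding pairs_answered_def by blast
  qed
  moreover have "q = p" if "q \<in> P" "u \<in> q" for q
    using P p that unfolding pairing_def pairwise_def disjnt_def by blast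
  then have "pairs_answered P M (insert w B)"
    using pairs_answered_insert[OF answered u(2) \<open>w \<notin> M\<close>] pw by blast
  ultimately show ?thesis by blast
next
  case False
  obtain w where w: "w \<in> V - (M \<union> B)" using free by blast
  then have "pairs_answered P M (insert w B)"
    using pairs_answered_insert[OF answered u(2)] False by blast
  with w show ?thesis by blast
qed

text \<open>On Breaker's turn the invariant only holds once Maker's last move \<open>u\<close> is disregarded.\<close>

lemma pairing_strategy_invariant:
  assumes "mb_win V E t M B" and P: "pairing V P" and blocks: "\<forall>e\<in>E. \<exists>p\<in>P. p \<subseteq> e"
  shows "\<not> (if t then pairs_answered P M B else \<exists>u\<in>M - B. pairs_answered P (M - {u}) B)"
  using assms(1)
proof (induction rule: mb_win.induct)
  case (final M B t)
  from final.hyps(2) obtain e where "e \<in> E" "e \<subseteq> M" by blast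
  then obtain p where p: "p \<in> P" "p \<subseteq> M" using blocks by blast
  then obtain a b where ab: "p = {a, b}" "a \<noteq> b"
    using P by (auto simp: pairing_def card_2_iff)
  show ?case
  proof (cases t)
    case True
    have "p \<inter> M \<noteq> {}" using p ab by blast
    then have "\<not> pairs_answered P M B" using p unfolding pairs_answered_def by blast
    then show ?thesis using True by simp
  next
    case False
    have "\<not> pairs_answered P (M - {u}) B" if "u \<notin> B" for u
    proof -
      have "p \<inter> (M - {u}) \<noteq> {}" using p ab by blast
      then show ?thesis using that p unfolding pairs_answered_def by blast
    qed
    then show ?thesis using False by auto
  qed
next
  case (maker_move v M B)
  show ?case
  proof
    assume "if True then pairs_answered P M B else \<exists>u\<in>M - B. pairs_answered P (M - {u}) B"
    moreover have "insert v M - {v} = M" using maker_move.hyps by blast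
    ultimately have "pairs_answered P (insert v M - {v}) B" by simp
    moreover have "v \<in> insert v M - B" using maker_move.hyps by blast
    ultimately have "\<exists>u\<in>insert v M - B. pairs_answered P (insert v M - {u}) B" by blast
    then show False using maker_move.IH by simp
  qed
next
  case (breaker_move M B)
  show ?case
  proof
    assume "if False then pairs_answered P M B else \<exists>u\<in>M - B. pairs_answered P (M - {u}) B"
    then obtain u where "u \<in> M" "u \<notin> B" "pairs_answered P (M - {u}) B" by auto
    then obtain w where "w \<in> V - (M \<union> B)" "pairs_answered P M (insert w B)"
      using pairing_response[OF P] breaker_move.hyps(1) by blast
    then show False using breaker_move.IH by simp
  qed
qed

theorem pairing_strategy:
  assumes "pairing V P" "\<forall>e\<in>E. \<exists>p\<in>P. p \<subseteq> e"
  shows "\<not> mb_win V E True {} {}"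
  using pairing_strategy_invariant[OF _ assms, of True "{}" "{}"] by (auto simp: pairs_answered_def)

definition pairing_except :: "'a hypergraph \<Rightarrow> 'a set \<Rightarrow> 'a set set \<Rightarrow> bool" where
  "pairing_except H e P \<longleftrightarrow>
     pairing (fst H) P \<and> \<not> e \<subseteq> \<Union>P \<and> (\<forall>f\<in>snd H - {e}. \<exists>p\<in>P. p \<subseteq> f)"

context L_sum
begin

lemma pairing_except_hsum:
  assumes IH1: "\<And>e. e \<in> snd H1 \<Longrightarrow> \<exists>P. pairing_except H1 e P"
    and IH2: "\<And>e. e \<in> snd H2 \<Longrightarrow> \<exists>P. pairing_except H2 e P"
    and e: "e = insert z e1 \<or> e \<in> snd H1 - {e1}"
  shows "\<exists>P. pairing_except (hsum H1 e1 H2 e2 z) e P"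
proof -
  define e' where "e' = (if e = insert z e1 then e1 else e)"
  have e': "e' \<in> snd H1" "e' \<subseteq> e" using e edge1 unfolding e'_def by auto
  obtain P1 u1 where P1: "pairing (fst H1) P1" "u1 \<in> e'" "u1 \<notin> \<Union>P1"
    "\<And>f. f \<in> snd H1 - {e'} \<Longrightarrow> \<exists>p\<in>P1. p \<subseteq> f"
    using IH1[OF e'(1)] unfolding pairing_except_def by blast
  obtain P2 u2 where P2: "pairing (fst H2) P2" "u2 \<in> e2" "u2 \<notin> \<Union>P2"
    "\<And>f. f \<in> snd H2 - {e2} \<Longrightarrow> \<exists>p\<in>P2. p \<subseteq> f"
    using IH2[OF edge2] unfolding pairing_except_def by blast
  have u1: "u1 \<in> fst H1" and u2: "u2 \<in> fst H2"
    using P1(2) P2(2) e'(1) edge2 edges_nonempty_subset by blast+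
  have pairs1: "\<Union>P1 \<subseteq> fst H1" and pairs2: "\<Union>P2 \<subseteq> fst H2"
    using P1(1) P2(1) by (simp_all add: pairing_def)
  define P where "P = insert {u2, z} (P1 \<union> P2)"
  have "pairing (insert z (fst H1 \<union> fst H2)) (P1 \<union> P2)"
    using pairing_Un[OF P1(1) P2(1) disjoint] by (rule pairing_mono) blast
  then have "pairing (fst (hsum H1 e1 H2 e2 z)) P"
    unfolding P_def fst_hsum
    using u2 P2(3) pairs1 pairs2 disjoint fresh by (intro pairing_insert) auto
  moreover have "\<not> e \<subseteq> \<Union>P"
    using u1 P1(2,3) e'(2) u2 pairs2 disjoint fresh unfolding P_def by blast
  moreover have "\<exists>p\<in>P. p \<subseteq> f" if f: "f \<in> snd (hsum H1 e1 H2 e2 z) - {e}" for f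
  proof -
    from f consider "f = insert z e1" | "f = insert z e2" | "f \<in> snd H1 - {e1}" "f \<noteq> e"
      | "f \<in> snd H2 - {e2}" unfolding snd_hsum by blast
    then obtain p where "p \<in> P" "p \<subseteq> f"
    proof cases
      case 1
      then have "e' = e" "e \<noteq> e1" using f e unfolding e'_def by auto
      then obtain p where "p \<in> P1" "p \<subseteq> e1" using P1(4) edge1 by blast
      then show ?thesis using that 1 unfolding P_def by blast
    next
      case 2
      then show ?thesis using that P2(2) unfolding P_def by blast
    next
      case 3
      then have "f \<noteq> e'" unfolding e'_def by auto
      then obtain p where "p \<in> P1" "p \<subseteq> f" using P1(4) 3 by blast
      then show ?thesis using that unfolding P_def by blast
    next
      case 4
      then obtain p where "p \<in> P2" "p \<subseteq> f" using P2(4) by blast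
      then show ?thesis using that unfolding P_def by blast
    qed
    then show ?thesis by blast
  qed
  ultimately show ?thesis unfolding pairing_except_def by blast
qed

end

lemma in_L_pairing_except: "in_L H \<Longrightarrow> e \<in> snd H \<Longrightarrow> \<exists>P. pairing_except H e P"
proof (induction arbitrary: e rule: in_L.induct)
  case (base v)
  then show ?case by (auto simp: pairing_except_def pairing_def)
next
  case (sum H1 H2 e1 e2 z)
  interpret L_sum H1 e1 H2 e2 z using sum.hyps by unfold_locales
  interpret swapped: L_sum H2 e2 H1 e1 z by (rule swap)
  from sum.prems consider "e = insert z e1 \<or> e \<in> snd H1 - {e1}" | "e = insert z e2 \<or> e \<in> snd H2 - {e2}"
    unfolding snd_hsum by blast
  then show ?case
  proof cases
    case 1
    then show ?thesis using pairing_except_hsum sum.IH by blast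
  next
    case 2
    then show ?thesis using swapped.pairing_except_hsum sum.IH hsum_commute by metis
  qed
qed

theorem proposition6p8:
  fixes H :: "'a hypergraph"
  assumes "in_L H"
  shows "is_hypergraph H \<and> atomic_mb_critical H"
proof -
  have hypergraph: "is_hypergraph H" using assms by (rule in_L_is_hypergraph)
  then have "finite (fst H)" by (simp add: is_hypergraph_def)
  moreover have "maker_threat (fst H) (snd H) {} {} H" by (auto simp: maker_threat_def)
  ultimately have "maker_wins H"
    unfolding maker_wins_def using maker_threat_wins assms by blast
  moreover have "breaker_wins (fst H, snd H - {e})" if e: "e \<in> snd H" for e
  proof -
    obtain P where "pairing (fst H) P" "\<forall>f\<in>snd H - {e}. \<exists>p\<in>P. p \<subseteq> f"
      using in_L_pairing_except[OF assms e] unfolding pairing_except_def by blast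
    then show ?thesis unfolding breaker_wins_def maker_wins_def by (simp add: pairing_strategy)
  qed
  ultimately show ?thesis
    using hypergraph in_L_atomic[OF assms] unfolding atomic_mb_critical_def mb_critical_def by blast
qed

end
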